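(* Let $p,q$ be positive integers, $z\in\mathbb{R}^p$, $w\in\mathbb{R}^q$, and let $e\in\mathbb{R}^p$ be the vector of all ones. Define $\psi:[0,+\infty)\to\mathbb{R}$ by $$\psi(\lambda):=-\lambda\|w\|+\left\langle e,\,[(\lambda+1)z-\|w\|e]^-\right\rangle,$$ and for $\lambda\ge0$ let $N(\lambda)$ be the $p\times p$ diagonal matrix $N(\lambda):=\operatorname{diag}\big(-\operatorname{sgn}([(\lambda+1)z-\|w\|e]^-)\big)$. Then $\psi$ is convex. Moreover, if $z^+\not\ge\|w\|e$ and $\langle z^-,e\rangle<\|w\|$, then: (1) for all $\lambda\ge0$, $-\|w\|+\langle e,N(\lambda)z\rangle\in\partial\psi(\lambda)$ and $-\|w\|+\langle e,N(\lambda)z\rangle<0$; (2) $\psi$ has a unique zero $\lambda_*>0$.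
   Context: For $\alpha\in\mathbb{R}$, $\alpha^+:=\max(\alpha,0)$ and $\alpha^-:=\max(-\alpha,0)$; for a vector $z\in\mathbb{R}^p$, $z^+$, $z^-$, $\operatorname{sgn}(z)$ are taken componentwise (with $\operatorname{sgn}(0)=0$), and $\operatorname{diag}(z)$ is the diagonal matrix with diagonal entries $z_1,\dots,z_p$. The order $\ge$ on vectors is componentwise, and $z^+\not\ge\|w\|e$ means that $z^+\ge\|w\|e$ fails. $\partial\psi(\lambda)$ denotes the subdifferential of the convex function $\psi$ at $\lambda$. *)

theory Defs
  imports "HOL-Analysis.Analysis"
begin

definition vpos :: "real^'n \<Rightarrow> real^'n" where
  "vpos z = (\<chi> i. max (z $ i) 0)"

definition vneg :: "real^'n \<Rightarrow> real^'n" where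
  "vneg z = (\<chi> i. max (- (z $ i)) 0)"

definition vsgn :: "real^'n \<Rightarrow> real^'n" where
  "vsgn z = (\<chi> i. sgn (z $ i))"

definition ones :: "real^'n" where
  "ones = (\<chi> i. 1)"

definition diagm :: "real^'n \<Rightarrow> real^'n^'n" where
  "diagm d = (\<chi> i j. if i = j then d $ i else 0)"

definition subdiff :: "real set \<Rightarrow> (real \<Rightarrow> real) \<Rightarrow> real \<Rightarrow> real set" where
  "subdiff S f x = {g. \<forall>y\<in>S. f y \<ge> f x + g * (y - x)}"

end

theory Submission
  imports Defs
begin

text \<open>
  Writing \<open>c = \<parallel>w\<parallel>\<close>, \<open>\<psi>(\<lambda>) = -\<lambda>c + \<Sum>\<^sub>i max(c - (\<lambda>+1)z\<^sub>i, 0)\<close> is a linear function plus a sum of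
  hinge functions, and the claimed value \<open>g(\<lambda>) = -c + \<langle>e, N(\<lambda>)z\<rangle>\<close> is a subgradient of each
  summand taken separately; a function with a subgradient everywhere is convex. Under the
  hypotheses, \<open>g(\<lambda>) \<le> -(c - \<langle>z\<^sup>-,e\<rangle>) < 0\<close> for every \<open>\<lambda>\<close>, so \<open>\<psi>\<close> is strictly decreasing and falls
  below the line \<open>\<psi>(0) - \<lambda>(c - \<langle>z\<^sup>-,e\<rangle>)\<close>; since \<open>\<psi>(0) > 0\<close> because some \<open>z\<^sub>i\<^sup>+ < c\<close>, the
  intermediate value theorem yields exactly one zero, and it is positive.
\<close>

lemma convex_on_if_subgradients:
  fixes f g :: "real \<Rightarrow> real"
  assumes "convex S" and sub: "\<And>x. x \<in> S \<Longrightarrow> g x \<in> subdiff S f x"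
  shows "convex_on S f"
proof (rule convex_onI[OF _ assms(1)])
  fix t x y :: real
  assume t: "0 < t" "t < 1" and xy: "x \<in> S" "y \<in> S"
  define m where "m = (1 - t) *\<^sub>R x + t *\<^sub>R y"
  have "m \<in> S"
    using convexD[OF assms(1) xy, of "1 - t" t] t by (simp add: m_def)
  then have "f m + g m * (x - m) \<le> f x" "f m + g m * (y - m) \<le> f y"
    using sub xy unfolding subdiff_def by auto
  then have "(1 - t) * (f m + g m * (x - m)) + t * (f m + g m * (y - m)) \<le> (1 - t) * f x + t * f y"
    using t by (intro add_mono mult_left_mono) auto
  moreover have "(1 - t) * (f m + g m * (x - m)) + t * (f m + g m * (y - m)) = f m"
    by (simp add: m_def algebra_simps)
  ultimately show "f m \<le> (1 - t) * f x + t * f y"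
    by simp
qed

lemma unique_positive_zero_if_subgradients_le_neg:
  fixes f g :: "real \<Rightarrow> real"
  assumes sub: "\<And>l. l \<ge> 0 \<Longrightarrow> g l \<in> subdiff {0..} f l"
    and slope: "\<And>l. l \<ge> 0 \<Longrightarrow> g l \<le> - d" and "d > 0"
    and "f 0 > 0" and cont: "continuous_on {0..} f"
  shows "\<exists>lst>0. f lst = 0 \<and> (\<forall>m\<ge>0. f m = 0 \<longrightarrow> m = lst)"
proof -
  have below: "f l \<le> f m - d * (l - m)" if "0 \<le> m" "m \<le> l" for l m
  proof -
    have "f l + g l * (m - l) \<le> f m"
      using sub[of l] that unfolding subdiff_def by auto
    moreover have "d * (l - m) \<le> - g l * (l - m)"
      using slope[of l] that by (intro mult_right_mono) auto
    ultimately show ?thesis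
      by (simp add: algebra_simps)
  qed
  have decreasing: "f l < f m" if "0 \<le> m" "m < l" for l m
    using below[of m l] that mult_pos_pos[OF \<open>d > 0\<close>, of "l - m"] by linarith
  define L where "L = f 0 / d + 1"
  have "L > 0"
    using \<open>d > 0\<close> \<open>f 0 > 0\<close> by (simp add: L_def add_pos_pos)
  have "f L \<le> f 0 - d * L"
    using below[of 0 L] \<open>L > 0\<close> by simp
  also have "\<dots> = - d"
    using \<open>d > 0\<close> by (simp add: L_def algebra_simps)
  finally have "f L < 0"
    using \<open>d > 0\<close> by simp
  then obtain lst where lst: "0 \<le> lst" "lst \<le> L" "f lst = 0"
    using IVT2'[of f L 0 0] continuous_on_subset[OF cont] \<open>f 0 > 0\<close> \<open>L > 0\<close> by force
  have "lst > 0"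
    using lst \<open>f 0 > 0\<close> by (cases "lst = 0") auto
  moreover have "m = lst" if "m \<ge> 0" "f m = 0" for m
    using decreasing[of m lst] decreasing[of lst m] lst that by (cases m lst rule: linorder_cases) auto
  ultimately show ?thesis
    using lst by blast
qed

lemma hinge_sum_subgradient:
  fixes a b :: "'i \<Rightarrow> real"
  assumes "finite I"
  shows "(\<Sum>i\<in>I. max (a i + l * b i) 0) + (\<Sum>i\<in>I. if a i + l * b i > 0 then b i else 0) * (y - l)
         \<le> (\<Sum>i\<in>I. max (a i + y * b i) 0)"
proof -
  have "max (a i + l * b i) 0 + (if a i + l * b i > 0 then b i else 0) * (y - l)
        \<le> max (a i + y * b i) 0" for i
    by (auto simp: algebra_simps)
  then show ?thesis
    by (simp add: sum_distrib_right sum.distrib[symmetric] sum_mono)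
qed

definition hinge_psi :: "real \<Rightarrow> ('i \<Rightarrow> real) \<Rightarrow> 'i set \<Rightarrow> real \<Rightarrow> real" where
  "hinge_psi c z I l = - l * c + (\<Sum>i\<in>I. max (c - (l + 1) * z i) 0)"

definition hinge_slope :: "real \<Rightarrow> ('i \<Rightarrow> real) \<Rightarrow> 'i set \<Rightarrow> real \<Rightarrow> real" where
  "hinge_slope c z I l = - c + (\<Sum>i\<in>I. if c - (l + 1) * z i > 0 then - z i else 0)"

lemma hinge_slope_subdiff:
  assumes "finite I"
  shows "hinge_slope c z I l \<in> subdiff S (hinge_psi c z I) l"
proof -
  have "c - (x + 1) * z i = (c - z i) + x * (- z i)" for x i
    by (simp add: algebra_simps)
  then show ?thesis
    using hinge_sum_subgradient[OF assms, of "\<lambda>i. c - z i" l "\<lambda>i. - z i"]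
    by (auto simp: subdiff_def hinge_psi_def hinge_slope_def algebra_simps)
qed

lemma hinge_slope_le: "hinge_slope c z I l \<le> - (c - (\<Sum>i\<in>I. max (- z i) 0))"
  unfolding hinge_slope_def by (auto intro!: sum_mono)

lemma hinge_psi_zero_pos:
  assumes "finite I" "i \<in> I" "max (z i) 0 < c"
  shows "hinge_psi c z I 0 > 0"
proof -
  have "0 < max (c - z i) 0"
    using assms(3) by simp
  also have "\<dots> \<le> (\<Sum>i\<in>I. max (c - z i) 0)"
    using assms(1,2) by (intro member_le_sum) auto
  finally show ?thesis
    by (simp add: hinge_psi_def)
qed

lemma continuous_on_hinge_psi: "continuous_on S (hinge_psi c z I)"
  unfolding hinge_psi_def by (intro continuous_intros)

lemma ones_inner_vneg: "ones \<bullet> vneg v = (\<Sum>i\<in>UNIV. max (- v $ i) 0)"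
  by (simp add: inner_vec_def ones_def vneg_def)

lemma ones_inner_diagm_mult: "ones \<bullet> (diagm d *v v) = (\<Sum>i\<in>UNIV. d $ i * v $ i)"
proof -
  have "(diagm d *v v) $ i = d $ i * v $ i" for i
    by (simp add: matrix_vector_mult_def diagm_def if_distrib[of "\<lambda>x. x * _"] cong: if_cong)
  then show ?thesis
    by (simp add: inner_vec_def ones_def)
qed

theorem proposition2:
  fixes z :: "real^'p" and w :: "real^'q"
    and psi :: "real \<Rightarrow> real" and N :: "real \<Rightarrow> real^'p^'p"
  assumes psi_def: "\<And>l. psi l = - l * norm w
                     + ones \<bullet> vneg ((l + 1) *\<^sub>R z - norm w *\<^sub>R ones)"
    and N_def: "\<And>l. N l = diagm (- vsgn (vneg ((l + 1) *\<^sub>R z - norm w *\<^sub>R ones)))"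
  shows "convex_on {0..} psi \<and>
         (\<not> (\<forall>i. vpos z $ i \<ge> (norm w *\<^sub>R ones) $ i) \<longrightarrow> vneg z \<bullet> ones < norm w \<longrightarrow>
          (\<forall>l\<ge>0. - norm w + ones \<bullet> (N l *v z) \<in> subdiff {0..} psi l
                  \<and> - norm w + ones \<bullet> (N l *v z) < 0)
          \<and> (\<exists>lst>0. psi lst = 0 \<and> (\<forall>m\<ge>0. psi m = 0 \<longrightarrow> m = lst)))"
proof -
  define c where "c = norm w"
  define g where "g = hinge_slope c (\<lambda>i. z $ i) UNIV"
  have psi_eq: "psi = hinge_psi c (\<lambda>i. z $ i) UNIV"
    unfolding fun_eq_iff psi_def ones_inner_vneg by (simp add: hinge_psi_def ones_def c_def algebra_simps)
  have g_eq: "- norm w + ones \<bullet> (N l *v z) = g l" for l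
    unfolding N_def ones_inner_diagm_mult
    by (auto simp: g_def hinge_slope_def vsgn_def vneg_def ones_def c_def intro!: sum.cong)
  have sub: "g l \<in> subdiff {0..} psi l" for l
    by (simp add: psi_eq g_def hinge_slope_subdiff)
  define s where "s = vneg z \<bullet> ones"
  have slope: "g l \<le> - (c - s)" for l
    using hinge_slope_le by (simp add: g_def s_def inner_commute ones_inner_vneg)
  have "\<exists>lst>0. psi lst = 0 \<and> (\<forall>m\<ge>0. psi m = 0 \<longrightarrow> m = lst)"
    if "\<not> (\<forall>i. vpos z $ i \<ge> (norm w *\<^sub>R ones) $ i)" and "vneg z \<bullet> ones < norm w"
  proof (rule unique_positive_zero_if_subgradients_le_neg[OF sub slope])
    show "c - s > 0"
      using that(2) by (simp add: s_def c_def)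
    show "psi 0 > 0"
      using that(1) hinge_psi_zero_pos[of UNIV _ "\<lambda>i. z $ i" c]
      by (auto simp: psi_eq vpos_def ones_def c_def not_le)
    show "continuous_on {0..} psi"
      by (simp add: psi_eq continuous_on_hinge_psi)
  qed
  moreover have "convex_on {0..} psi"
    using convex_on_if_subgradients[of "{0..}" g psi] sub by simp
  moreover have "g l < 0" if "vneg z \<bullet> ones < norm w" for l
    using slope[of l] that by (simp add: s_def c_def)
  ultimately show ?thesis
    unfolding g_eq using sub by blast
qed

end
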